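(* In the FSISIC-with-AWGN setting below, let a codeword $x_1^n\in\mathcal C$ be transmitted from an initial state $s_1\in\mathcal S_0$, let $(\tilde e_1,\dots,\tilde e_n)$ be the resulting edge-path (so $\tilde e_i=(i,s_i,\eta(x_i,s_i),x_i)$ with $s_{i+1}=\eta(x_i,s_i)$), and let $\mathbf c=(c_1,\dots,c_n)$ with $c_i=a(\tilde e_i)$ be the symbol-wise signal-space codeword. The received sequence is $\mathbf y=\mathbf c+\mathbf v$, where $v_1,\dots,v_n$ are i.i.d. $\mathcal N(0,\sigma^2)$. Let $g\in\mathcal P_{\mathcal T}(H)$ be fixed (independent of $\mathbf v$), let $\mathbf p=(p_1,\dots,p_n)$ with $p_i=\sum_{e:\,t(e)=i}g(e)a(e)$ be its signal-space projection, and assume $\mathbf p\neq\mathbf c$. Define $\|\mathbf d\|^2=\sum_{i=1}^n(c_i-p_i)^2$, $\sigma_p^2=\sum_{e\in\mathcal E}g(e)a(e)^2-\sum_{i=1}^np_i^2$, and $d_{gen}^2(\mathbf c,\mathbf p)=\frac{(\|\mathbf d\|^2+\sigma_p^2)^2}{\|\mathbf d\|^2}$. Then the pairwise error probability $$\Pr(\mathbf c\to\mathbf p)=\Pr\Big\{\sum_{e\in\mathcal E}g(e)\big(y_{t(e)}-a(e)\big)^2\le\sum_{i=1}^n(y_i-c_i)^2\Big\}$$ equals $Q\!\left(\frac{d_{gen}(\mathbf c,\mathbf p)}{2\sigma}\right)$, where $d_{gen}=\frac{\|\mathbf d\|^2+\sigma_p^2}{\|\mathbf d\|}$ and $Q(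z)=\int_z^\infty\frac{1}{\sqrt{2\pi}}e^{-u^2/2}\,du$.
   Context: Let $\mathcal C\subseteq\{0,1\}^n$ be a binary linear code with parity-check matrix $H$, and let $\mathcal I$ be the collection of sets of column indices participating in each row (parity check) of $H$. For $I\in\mathcal I$ define $\mathrm{LCP}(I)=\bigcap_{S\subseteq I,\ |S|\text{ odd}}\{\mathbf f\in[0,1]^n:\sum_{i\in S}f_i-\sum_{i\in I\setminus S}f_i\le |S|-1\}$ and $\mathcal P(H)=\bigcap_{I\in\mathcal I}\mathrm{LCP}(I)$. FSISIC with AWGN: finite state set $\mathcal S$, functions $\eta:\{0,1\}\times\mathcal S\to\mathcal S$ (next state) and $\alpha:\mathcal S\times\{0,1\}\to\mathbb R$ (noiseless output), noise variance $\sigma^2>0$, and a nonempty set $\mathcal S_0\subseteq\mathcal S$ of allowed initial states. The trellis edge set is $\mathcal E=\{(i,s,\eta(x,s),x): i\in\{1,\dots,n\},\ x\in\{0,1\},\ s\in\mathcal S\text{ (with } s\in\mathcal S_0\text{ if } i=1)\}$; for $e=(i,s,s',x)$ write $t(e)=i$, $s(e)=s$, $s'(e)=s'$, $x(e)=x$, $a(e)=\alpha(s,x)$. The trellis polytope $\mathcal T$ is the set of $g:\mathcal E\to[0,1]$ with $\sum_{e:\,t(e)=1}g(e)=1$ and, for every $i=1,\dots,n-1$ and $j\in\mathcal S$, $\sum_{e:\,t(e)=i,\,s'(e)=j}g(e)=\sum_{e:\,t(e)=i+1,\,s(e)=j}g(e)$. The projection $\mathcal Q$ maps $g$ to $\mathbf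 f=\mathcal Qg$ with $f_i=\sum_{e:\,t(e)=i,\,x(e)=1}g(e)$. The trellis-wise relaxed polytope is $\mathcal P_{\mathcal T}(H)=\{g\in\mathcal T:\mathcal Qg\in\mathcal P(H)\}$. *)

theory Defs
  imports "HOL-Probability.Probability"
begin

text \<open>Trellis edges are tuples (i, s, s', x): time index, current state, next state, input bit.
  Bits are represented by bool (True = 1). The state set S is the finite type 's.\<close>

type_synonym 's edge = "nat \<times> 's \<times> 's \<times> bool"

definition t_of :: "'s edge \<Rightarrow> nat" where "t_of e = fst e"
definition s_of :: "'s edge \<Rightarrow> 's" where "s_of e = fst (snd e)"
definition s'_of :: "'s edge \<Rightarrow> 's" where "s'_of e = fst (snd (snd e))"
definition x_of :: "'s edge \<Rightarrow> bool" where "x_of e = snd (snd (snd e))"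
definition a_of :: "('s \<Rightarrow> bool \<Rightarrow> real) \<Rightarrow> 's edge \<Rightarrow> real" where
  "a_of \<alpha> e = \<alpha> (s_of e) (x_of e)"

definition trellis_edges :: "nat \<Rightarrow> 's set \<Rightarrow> (bool \<Rightarrow> 's \<Rightarrow> 's) \<Rightarrow> 's edge set" where
  "trellis_edges n S0 \<eta> =
     {(i, s, \<eta> x s, x) | i s x. i \<in> {1..n} \<and> (i = 1 \<longrightarrow> s \<in> S0)}"

text \<open>Parity-check matrix H with m rows (indexed 1..m) and n columns (indexed 1..n);
  H j i = True means entry (j,i) equals 1.\<close>

definition check_sets :: "nat \<Rightarrow> nat \<Rightarrow> (nat \<Rightarrow> nat \<Rightarrow> bool) \<Rightarrow> nat set set" where
  "check_sets m n H = {{i \<in> {1..n}. H j i} | j. j \<in> {1..m}}"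

definition code_of :: "nat \<Rightarrow> nat \<Rightarrow> (nat \<Rightarrow> nat \<Rightarrow> bool) \<Rightarrow> (nat \<Rightarrow> bool) set" where
  "code_of m n H = {x. \<forall>I \<in> check_sets m n H. even (card {i \<in> I. x i})}"

definition LCP :: "nat \<Rightarrow> nat set \<Rightarrow> (nat \<Rightarrow> real) set" where
  "LCP n I = {f. (\<forall>i \<in> {1..n}. 0 \<le> f i \<and> f i \<le> 1) \<and>
      (\<forall>S \<subseteq> I. odd (card S) \<longrightarrow>
         (\<Sum>i\<in>S. f i) - (\<Sum>i\<in>I - S. f i) \<le> real (card S) - 1)}"

definition relaxed_polytope :: "nat \<Rightarrow> nat \<Rightarrow> (nat \<Rightarrow> nat \<Rightarrow> bool) \<Rightarrow> (nat \<Rightarrow> real) set" where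
  "relaxed_polytope m n H = {f. (\<forall>i \<in> {1..n}. 0 \<le> f i \<and> f i \<le> 1) \<and>
      (\<forall>I \<in> check_sets m n H. f \<in> LCP n I)}"

definition trellis_polytope :: "nat \<Rightarrow> 's set \<Rightarrow> (bool \<Rightarrow> 's \<Rightarrow> 's) \<Rightarrow> ('s edge \<Rightarrow> real) set" where
  "trellis_polytope n S0 \<eta> = {g.
     (\<forall>e \<in> trellis_edges n S0 \<eta>. 0 \<le> g e \<and> g e \<le> 1) \<and>
     (\<Sum>e \<in> {e \<in> trellis_edges n S0 \<eta>. t_of e = 1}. g e) = 1 \<and>
     (\<forall>i \<in> {1..<n}. \<forall>j.
        (\<Sum>e \<in> {e \<in> trellis_edges n S0 \<eta>. t_of e = i \<and> s'_of e = j}. g e) =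
        (\<Sum>e \<in> {e \<in> trellis_edges n S0 \<eta>. t_of e = Suc i \<and> s_of e = j}. g e))}"

definition proj_Q :: "nat \<Rightarrow> 's set \<Rightarrow> (bool \<Rightarrow> 's \<Rightarrow> 's) \<Rightarrow> ('s edge \<Rightarrow> real) \<Rightarrow> nat \<Rightarrow> real" where
  "proj_Q n S0 \<eta> g i = (\<Sum>e \<in> {e \<in> trellis_edges n S0 \<eta>. t_of e = i \<and> x_of e}. g e)"

definition trellis_relaxed_polytope ::
  "nat \<Rightarrow> nat \<Rightarrow> (nat \<Rightarrow> nat \<Rightarrow> bool) \<Rightarrow> 's set \<Rightarrow> (bool \<Rightarrow> 's \<Rightarrow> 's) \<Rightarrow> ('s edge \<Rightarrow> real) set" where
  "trellis_relaxed_polytope m n H S0 \<eta> =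
     {g \<in> trellis_polytope n S0 \<eta>. proj_Q n S0 \<eta> g \<in> relaxed_polytope m n H}"

definition Qfun :: "real \<Rightarrow> real" where
  "Qfun z = (LBINT u:{z..}. (1 / sqrt (2 * pi)) * exp (- (u\<^sup>2) / 2))"

definition noise_measure :: "nat \<Rightarrow> real \<Rightarrow> (nat \<Rightarrow> real) measure" where
  "noise_measure n \<sigma> = PiM {1..n} (\<lambda>_. density lborel (normal_density 0 \<sigma>))"

end

theory Submission
  imports Defs
begin

(* Write y = c + v.  For a trellis pseudo-codeword g the flow-conservation
   constraints force every time layer of the trellis to carry total weight 1.  Expanding
   the squares layer by layer then turns the difference of the two decision metrics into
   the affine function  \<parallel>d\<parallel>\<^sup>2 + \<sigma>p\<^sup>2 + 2 \<Sum>i (c i - p i) v i  of the noise.  Hence the pairwise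
   error event is a half-space, and the linear form \<Sum>i d i v i of i.i.d. N(0,\<sigma>\<^sup>2) noise is
   N(0, \<sigma>\<^sup>2 \<parallel>d\<parallel>\<^sup>2), so its probability is a Gaussian tail Q(\<cdot>). *)

lemma coordinates_indep_PiM:
  fixes N :: "real measure" and I :: "nat set"
  assumes pN: "prob_space N" and sN: "sets N = sets borel" and I: "I \<noteq> {}"
  shows "prob_space.indep_vars (PiM I (\<lambda>_. N)) (\<lambda>_. borel) (\<lambda>i \<omega>. \<omega> i) I"
proof -
  define M where "M = PiM I (\<lambda>_. N)"
  interpret prob_space M unfolding M_def by (intro prob_space_PiM pN)
  have sM: "sets M = sets (PiM I (\<lambda>_. borel))"
    unfolding M_def by (intro sets_PiM_cong) (auto simp: sN)
  have rv: "random_variable borel (\<lambda>\<omega>. \<omega> i)" if "i \<in> I" for i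
    unfolding M_def using that by (simp add: measurable_cong_sets[OF refl sN[symmetric]])
  have restrict_distr: "distr M (PiM I (\<lambda>_. borel)) (\<lambda>x. \<lambda>i\<in>I. x i) = M"
  proof (rule measure_eqI)
    show "sets (distr M (PiM I (\<lambda>_. borel)) (\<lambda>x. \<lambda>i\<in>I. x i)) = sets M" using sM by simp
  next
    fix A assume A: "A \<in> sets (distr M (PiM I (\<lambda>_. borel)) (\<lambda>x. \<lambda>i\<in>I. x i))"
    have meas: "(\<lambda>x. \<lambda>i\<in>I. x i) \<in> measurable M (PiM I (\<lambda>_. borel))"
      using rv by (intro measurable_restrict) auto
    have "A \<subseteq> space M" using A sM sets.sets_into_space by (metis sets_distr)
    moreover have "x \<in> space M \<Longrightarrow> (\<lambda>i\<in>I. x i) = x" for x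
      unfolding M_def by (auto simp: space_PiM PiE_def extensional_def restrict_def)
    ultimately have "(\<lambda>x. \<lambda>i\<in>I. x i) -` A \<inter> space M = A" by auto
    then show "emeasure (distr M (PiM I (\<lambda>_. borel)) (\<lambda>x. \<lambda>i\<in>I. x i)) A = emeasure M A"
      using A meas by (simp add: emeasure_distr)
  qed
  have marginal: "distr M borel (\<lambda>\<omega>. \<omega> i) = N" if "i \<in> I" for i
  proof -
    have "distr M borel (\<lambda>\<omega>. \<omega> i) = distr M N (\<lambda>\<omega>. \<omega> i)"
      by (rule distr_cong) (auto simp: sN)
    also have "\<dots> = N" unfolding M_def by (rule distr_PiM_component[OF pN that])
    finally show ?thesis .
  qed
  have "(\<Pi>\<^sub>M i\<in>I. distr M borel (\<lambda>\<omega>. \<omega> i)) = M"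
    by (subst M_def, rule PiM_cong) (auto simp: marginal)
  then show ?thesis
    using indep_vars_iff_distr_eq_PiM'[OF I rv] restrict_distr unfolding M_def by simp
qed

lemma noise_coordinate_distributed:
  assumes "\<sigma> > 0" and "i \<in> {1..n}"
  shows "distributed (noise_measure n \<sigma>) lborel (\<lambda>v. v i) (normal_density 0 \<sigma>)"
proof -
  define N where "N = density lborel (normal_density 0 \<sigma>)"
  have pN: "prob_space N" unfolding N_def using assms(1) by (rule prob_space_normal_density)
  have sN: "sets N = sets borel" unfolding N_def by simp
  have "distr (noise_measure n \<sigma>) lborel (\<lambda>v. v i) = distr (noise_measure n \<sigma>) N (\<lambda>v. v i)"
    by (rule distr_cong) (auto simp: sN noise_measure_def N_def)
  also have "\<dots> = N"
    unfolding noise_measure_def N_def[symmetric] by (rule distr_PiM_component[OF pN assms(2)])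
  finally have "distr (noise_measure n \<sigma>) lborel (\<lambda>v. v i) = N" .
  moreover have "(\<lambda>v. v i) \<in> measurable (noise_measure n \<sigma>) lborel"
    using measurable_component_singleton[OF assms(2), of "\<lambda>_. N"] sN
    unfolding noise_measure_def N_def by (simp add: measurable_cong_sets[OF refl, of N lborel])
  ultimately show ?thesis unfolding distributed_def N_def by simp
qed

(* Coordinates with d i = 0 are discarded so that every summand is non-degenerate. *)
lemma noise_linear_form_distributed:
  fixes d :: "nat \<Rightarrow> real"
  assumes sp: "\<sigma> > 0" and pos: "(\<Sum>i=1..n. (d i)\<^sup>2) > 0"
  shows "distributed (noise_measure n \<sigma>) lborel (\<lambda>v. \<Sum>i=1..n. d i * v i)
           (normal_density 0 (\<sigma> * sqrt (\<Sum>i=1..n. (d i)\<^sup>2)))"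
proof -
  define M where "M = noise_measure n \<sigma>"
  define N where "N = density lborel (normal_density 0 \<sigma>)"
  have pN: "prob_space N" unfolding N_def using sp by (rule prob_space_normal_density)
  interpret prob_space M unfolding M_def noise_measure_def N_def[symmetric]
    by (intro prob_space_PiM pN)
  define J where "J = {i \<in> {1..n}. d i \<noteq> 0}"
  have JI: "J \<subseteq> {1..n}" and fJ: "finite J" unfolding J_def by auto
  have J0: "J \<noteq> {}"
  proof
    assume "J = {}"
    then have "(\<Sum>i=1..n. (d i)\<^sup>2) = 0" unfolding J_def by (auto intro: sum.neutral)
    then show False using pos by simp
  qed
  have indep: "indep_vars (\<lambda>_. borel) (\<lambda>i v. v i) {1..n}"
    using coordinates_indep_PiM[OF pN _, of "{1..n}"] J0 JI
    unfolding M_def noise_measure_def N_def by auto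
  have on_J: "(\<Sum>i\<in>J. f i) = (\<Sum>i=1..n. f i)" if "\<And>i. d i = 0 \<Longrightarrow> f i = 0" for f
    by (rule sum.mono_neutral_left) (use that in \<open>auto simp: J_def\<close>)
  have "distributed M lborel (\<lambda>v. \<Sum>i\<in>J. 0 + d i * v i)
          (normal_density (\<Sum>i\<in>J. 0 + d i * 0) (sqrt (\<Sum>i\<in>J. (\<bar>d i\<bar> * \<sigma>)\<^sup>2)))"
  proof (rule sum_indep_normal[OF fJ J0])
    show "indep_vars (\<lambda>i. borel) (\<lambda>i v. 0 + d i * v i) J"
      using indep_vars_compose2[OF indep_vars_subset[OF indep JI], of "\<lambda>i y. 0 + d i * y"]
      by simp
    show "0 < \<bar>d i\<bar> * \<sigma>" if "i \<in> J" for i using that sp by (auto simp: J_def)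
    show "distributed M lborel (\<lambda>v. 0 + d i * v i) (normal_density (0 + d i * 0) (\<bar>d i\<bar> * \<sigma>))"
      if "i \<in> J" for i
    proof -
      have "distributed M lborel (\<lambda>v. v i) (normal_density 0 \<sigma>)"
        using that JI unfolding M_def by (intro noise_coordinate_distributed sp) auto
      then show ?thesis using that sp by (intro normal_density_affine) (auto simp: J_def)
    qed
  qed
  moreover have "(\<lambda>v. \<Sum>i\<in>J. 0 + d i * v i) = (\<lambda>v. \<Sum>i=1..n. d i * v i)"
  proof
    fix v :: "nat \<Rightarrow> real"
    show "(\<Sum>i\<in>J. 0 + d i * v i) = (\<Sum>i=1..n. d i * v i)"
      using on_J[of "\<lambda>i. d i * v i"] by simp
  qed
  moreover have "(\<Sum>i\<in>J. (\<bar>d i\<bar> * \<sigma>)\<^sup>2) = \<sigma>\<^sup>2 * (\<Sum>i=1..n. (d i)\<^sup>2)"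
    by (subst on_J) (auto simp: sum_distrib_left power_mult_distrib mult.commute)
  ultimately show ?thesis
    using sp unfolding M_def by (simp add: real_sqrt_mult)
qed

lemma std_normal_tail:
  "measure (density lborel std_normal_density) {z..} = Qfun z"
proof -
  have "emeasure (density lborel std_normal_density) {z..}
        = (\<integral>\<^sup>+u. ennreal (indicator {z..} u * std_normal_density u) \<partial>lborel)"
    by (subst emeasure_density) (auto intro!: nn_integral_cong split: split_indicator)
  also have "\<dots> = ennreal (\<integral>u. indicator {z..} u * std_normal_density u \<partial>lborel)"
    by (rule nn_integral_eq_integral)
      (use integrable_real_mult_indicator[of "{z..}" lborel std_normal_density]
        in \<open>auto simp: mult.commute\<close>)
  finally have "measure (density lborel std_normal_density) {z..}
                = (LBINT u:{z..}. std_normal_density u)"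
    unfolding measure_def set_lebesgue_integral_def by (simp add: integral_nonneg_AE)
  then show ?thesis unfolding Qfun_def std_normal_density_def by simp
qed

(* The noise falls into the half-space  K + 2\<langle>d,v\<rangle> \<le> 0  with probability Q(K/(2\<sigma>\<parallel>d\<parallel>)):
   the standardised variable Z = -\<langle>d,v\<rangle>/(\<sigma>\<parallel>d\<parallel>) is standard normal. *)
lemma noise_halfspace_probability:
  fixes d :: "nat \<Rightarrow> real"
  assumes sp: "\<sigma> > 0" and pos: "(\<Sum>i=1..n. (d i)\<^sup>2) > 0"
  shows "measure (noise_measure n \<sigma>)
           {v \<in> space (noise_measure n \<sigma>). K + 2 * (\<Sum>i=1..n. d i * v i) \<le> 0}
         = Qfun (K / (2 * \<sigma> * sqrt (\<Sum>i=1..n. (d i)\<^sup>2)))"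
proof -
  define M where "M = noise_measure n \<sigma>"
  define s where "s = \<sigma> * sqrt (\<Sum>i=1..n. (d i)\<^sup>2)"
  define z where "z = K / (2 * s)"
  define Z where "Z = (\<lambda>v. 0 + (-1/s) * (\<Sum>i=1..n. d i * v i))"
  have s0: "s > 0" unfolding s_def using sp pos by simp
  interpret prob_space M unfolding M_def noise_measure_def
    using sp by (intro prob_space_PiM prob_space_normal_density)
  have "distributed M lborel (\<lambda>v. \<Sum>i=1..n. d i * v i) (normal_density 0 s)"
    unfolding M_def s_def by (rule noise_linear_form_distributed[OF sp pos])
  then have "distributed M lborel Z (normal_density (0 + (-1/s) * 0) (\<bar>-1/s\<bar> * s))"
    unfolding Z_def using s0 by (intro normal_density_affine) auto
  then have Zd: "distributed M lborel Z std_normal_density" using s0 by simp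
  have event: "{v \<in> space M. K + 2 * (\<Sum>i=1..n. d i * v i) \<le> 0} = Z -` {z..} \<inter> space M"
  proof -
    have "K + 2 * y \<le> 0 \<longleftrightarrow> z \<le> 0 + (-1/s) * y" for y
      unfolding z_def using s0 by (simp add: field_simps, linarith)
    then show ?thesis unfolding Z_def by auto
  qed
  have "measure M (Z -` {z..} \<inter> space M) = measure (distr M lborel Z) {z..}"
    using distributed_measurable[OF Zd] by (simp add: measure_distr)
  also have "\<dots> = Qfun z"
    using distributed_distr_eq_density[OF Zd] std_normal_tail by simp
  finally show ?thesis unfolding M_def[symmetric] event z_def s_def by (simp add: mult.assoc)
qed

lemma finite_trellis_edges:
  "finite (trellis_edges n S0 (\<eta> :: bool \<Rightarrow> 's::finite \<Rightarrow> 's))"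
proof -
  have "trellis_edges n S0 \<eta> \<subseteq> {1..n} \<times> (UNIV :: ('s \<times> 's \<times> bool) set)"
    unfolding trellis_edges_def by auto
  then show ?thesis by (rule finite_subset) auto
qed

lemma trellis_edges_time: "t_of ` trellis_edges n S0 \<eta> \<subseteq> {1..n}"
  unfolding trellis_edges_def t_of_def by auto

(* Flow conservation propagates the unit mass of the first layer: every time layer
   i \<in> {1..n} of a point of the trellis polytope has total weight 1. *)
lemma trellis_layer_mass:
  fixes g :: "'s::finite edge \<Rightarrow> real"
  assumes gT: "g \<in> trellis_polytope n S0 \<eta>" and i: "i \<in> {1..n}"
  shows "(\<Sum>e \<in> {e \<in> trellis_edges n S0 \<eta>. t_of e = i}. g e) = 1"
proof -
  have "1 \<le> i" and "i \<le> n" using i by auto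
  then show ?thesis
  proof (induction i rule: nat_induct_at_least)
    case base
    then show ?case using gT unfolding trellis_polytope_def by simp
  next
    case (Suc k)
    define E where "E = trellis_edges n S0 \<eta>"
    have k: "k \<in> {1..<n}" using Suc.hyps Suc.prems by auto
    have fin: "finite {e \<in> E. t_of e = i}" for i
      using finite_trellis_edges[of n S0 \<eta>] unfolding E_def by auto
    (* group a layer by the state through which its edges leave resp. enter *)
    have by_state: "(\<Sum>e \<in> {e \<in> E. t_of e = i}. g e)
          = (\<Sum>j\<in>UNIV. \<Sum>e \<in> {e \<in> E. t_of e = i \<and> f e = j}. g e)" for i and f :: "'s edge \<Rightarrow> 's"
      using sum.group[OF fin[of i] finite_class.finite_UNIV, of f g] by (simp add: conj_assoc)
    have "(\<Sum>e \<in> {e \<in> E. t_of e = Suc k}. g e)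
          = (\<Sum>j\<in>UNIV. \<Sum>e \<in> {e \<in> E. t_of e = Suc k \<and> s_of e = j}. g e)"
      by (rule by_state)
    also have "\<dots> = (\<Sum>j\<in>UNIV. \<Sum>e \<in> {e \<in> E. t_of e = k \<and> s'_of e = j}. g e)"
      using gT k unfolding trellis_polytope_def E_def by simp
    also have "\<dots> = (\<Sum>e \<in> {e \<in> E. t_of e = k}. g e)"
      by (rule by_state[symmetric])
    also have "\<dots> = 1" using Suc.IH k unfolding E_def by auto
    finally show ?case unfolding E_def .
  qed
qed

lemma weighted_square_expand:
  fixes w a :: "'e \<Rightarrow> real"
  shows "(\<Sum>e\<in>A. w e * (u - a e)\<^sup>2)
       = u\<^sup>2 * (\<Sum>e\<in>A. w e) - 2 * u * (\<Sum>e\<in>A. w e * a e) + (\<Sum>e\<in>A. w e * (a e)\<^sup>2)"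
  by (simp add: power2_diff algebra_simps sum.distrib sum_subtractf sum_distrib_left sum_distrib_right)

lemma metric_difference_affine:
  fixes E :: "'e set" and t :: "'e \<Rightarrow> nat" and w a :: "'e \<Rightarrow> real" and c v :: "nat \<Rightarrow> real"
  assumes finE: "finite E" and tE: "t ` E \<subseteq> {1..n}"
    and mass: "\<And>i. i \<in> {1..n} \<Longrightarrow> (\<Sum>e \<in> {e \<in> E. t e = i}. w e) = 1"
  defines "p \<equiv> \<lambda>i. \<Sum>e \<in> {e \<in> E. t e = i}. w e * a e"
  shows "(\<Sum>e\<in>E. w e * ((c (t e) + v (t e)) - a e)\<^sup>2) - (\<Sum>i=1..n. ((c i + v i) - c i)\<^sup>2)
       = ((\<Sum>i=1..n. (c i - p i)\<^sup>2) + ((\<Sum>e\<in>E. w e * (a e)\<^sup>2) - (\<Sum>i=1..n. (p i)\<^sup>2)))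
         + 2 * (\<Sum>i=1..n. (c i - p i) * v i)"
proof -
  define A where "A = (\<lambda>i. \<Sum>e \<in> {e \<in> E. t e = i}. w e * (a e)\<^sup>2)"
  have by_layer: "(\<Sum>e\<in>E. F e) = (\<Sum>i=1..n. \<Sum>e\<in>{e\<in>E. t e = i}. F e)" for F :: "'e \<Rightarrow> real"
    using sum.group[OF finE finite_atLeastAtMost tE, of F] by simp
  have "(\<Sum>e\<in>E. w e * ((c (t e) + v (t e)) - a e)\<^sup>2)
        = (\<Sum>i=1..n. \<Sum>e\<in>{e\<in>E. t e = i}. w e * ((c i + v i) - a e)\<^sup>2)"
    unfolding by_layer by (intro sum.cong refl) auto
  also have "\<dots> = (\<Sum>i=1..n. (c i + v i)\<^sup>2 - 2 * (c i + v i) * p i + A i)"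
    by (intro sum.cong refl, subst weighted_square_expand) (simp add: mass p_def A_def)
  finally have edge_metric: "(\<Sum>e\<in>E. w e * ((c (t e) + v (t e)) - a e)\<^sup>2)
        = (\<Sum>i=1..n. (c i + v i)\<^sup>2 - 2 * (c i + v i) * p i + A i)" .
  have "(\<Sum>e\<in>E. w e * (a e)\<^sup>2) = (\<Sum>i=1..n. A i)"
    unfolding A_def by (rule by_layer)
  then have "((\<Sum>i=1..n. (c i - p i)\<^sup>2) + ((\<Sum>e\<in>E. w e * (a e)\<^sup>2) - (\<Sum>i=1..n. (p i)\<^sup>2)))
         + 2 * (\<Sum>i=1..n. (c i - p i) * v i)
       = (\<Sum>i=1..n. ((c i + v i)\<^sup>2 - 2 * (c i + v i) * p i + A i) - ((c i + v i) - c i)\<^sup>2)"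
    by (simp add: sum.distrib sum_subtractf sum_distrib_left power2_eq_square algebra_simps)
  then show ?thesis unfolding edge_metric by (simp add: sum_subtractf)
qed

theorem theorem5:
  fixes m n :: nat
    and H :: "nat \<Rightarrow> nat \<Rightarrow> bool"
    and \<eta> :: "bool \<Rightarrow> 's::finite \<Rightarrow> 's"
    and \<alpha> :: "'s \<Rightarrow> bool \<Rightarrow> real"
    and \<sigma> :: real
    and S0 :: "'s set"
    and x :: "nat \<Rightarrow> bool"
    and st :: "nat \<Rightarrow> 's"
    and g :: "'s edge \<Rightarrow> real"
  assumes sigma_pos: "\<sigma> > 0"
    and S0_ne: "S0 \<noteq> {}"
    and codeword: "x \<in> code_of m n H"
    and init: "st 1 \<in> S0"
    and path: "\<forall>i \<in> {1..<n}. st (Suc i) = \<eta> (x i) (st i)"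
    and g_in: "g \<in> trellis_relaxed_polytope m n H S0 \<eta>"
    and p_ne_c: "(\<lambda>i \<in> {1..n}. \<Sum>e \<in> {e \<in> trellis_edges n S0 \<eta>. t_of e = i}. g e * a_of \<alpha> e)
                 \<noteq> (\<lambda>i \<in> {1..n}. \<alpha> (st i) (x i))"
  shows
    "let E = trellis_edges n S0 \<eta>;
         c = (\<lambda>i. \<alpha> (st i) (x i));
         p = (\<lambda>i. \<Sum>e \<in> {e \<in> E. t_of e = i}. g e * a_of \<alpha> e);
         d2 = (\<Sum>i=1..n. (c i - p i)\<^sup>2);
         \<sigma>p2 = (\<Sum>e \<in> E. g e * (a_of \<alpha> e)\<^sup>2) - (\<Sum>i=1..n. (p i)\<^sup>2);
         dgen = (d2 + \<sigma>p2) / sqrt d2;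
         M = noise_measure n \<sigma>
     in measure M {v \<in> space M.
          (\<Sum>e \<in> E. g e * ((c (t_of e) + v (t_of e)) - a_of \<alpha> e)\<^sup>2)
            \<le> (\<Sum>i=1..n. ((c i + v i) - c i)\<^sup>2)}
        = Qfun (dgen / (2 * \<sigma>))"
proof -
  define E where "E = trellis_edges n S0 \<eta>"
  define c where "c = (\<lambda>i. \<alpha> (st i) (x i))"
  define p where "p = (\<lambda>i. \<Sum>e \<in> {e \<in> E. t_of e = i}. g e * a_of \<alpha> e)"
  define K where "K = (\<Sum>i=1..n. (c i - p i)\<^sup>2) + ((\<Sum>e \<in> E. g e * (a_of \<alpha> e)\<^sup>2) - (\<Sum>i=1..n. (p i)\<^sup>2))"
  define M where "M = noise_measure n \<sigma>"
  have gT: "g \<in> trellis_polytope n S0 \<eta>"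
    using g_in unfolding trellis_relaxed_polytope_def by simp
  have metric: "(\<Sum>e \<in> E. g e * ((c (t_of e) + v (t_of e)) - a_of \<alpha> e)\<^sup>2)
                   - (\<Sum>i=1..n. ((c i + v i) - c i)\<^sup>2)
                 = K + 2 * (\<Sum>i=1..n. (c i - p i) * v i)" for v
    unfolding K_def p_def E_def
    by (rule metric_difference_affine[OF finite_trellis_edges trellis_edges_time
            trellis_layer_mass[OF gT]])
  have event: "{v \<in> space M. (\<Sum>e \<in> E. g e * ((c (t_of e) + v (t_of e)) - a_of \<alpha> e)\<^sup>2)
                               \<le> (\<Sum>i=1..n. ((c i + v i) - c i)\<^sup>2)}
             = {v \<in> space M. K + 2 * (\<Sum>i=1..n. (c i - p i) * v i) \<le> 0}"
    using metric by (intro Collect_cong conj_cong refl) (smt (verit))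
  obtain i where i: "i \<in> {1..n}" "c i \<noteq> p i"
    using p_ne_c unfolding p_def c_def E_def by (auto simp: restrict_def fun_eq_iff split: if_splits)
  then have "(\<Sum>i=1..n. (c i - p i)\<^sup>2) > 0"
    by (intro sum_pos2[of "{1..n}" i]) auto
  then have "measure M {v \<in> space M. K + 2 * (\<Sum>i=1..n. (c i - p i) * v i) \<le> 0}
        = Qfun (K / (2 * \<sigma> * sqrt (\<Sum>i=1..n. (c i - p i)\<^sup>2)))"
    unfolding M_def by (rule noise_halfspace_probability[OF sigma_pos])
  moreover have "K / (2 * \<sigma> * sqrt D) = K / sqrt D / (2 * \<sigma>)" for D
    by simp
  ultimately show ?thesis
    unfolding Let_def E_def[symmetric] c_def[symmetric] M_def[symmetric] event
    by (simp only: K_def p_def)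
qed

end
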